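(* $$\liminf_{a,b\to\infty} r(a,b)=1,$$ where the limit inferior is taken as $\min(a,b)\to\infty$ over pairs of positive integers $(a,b)$.
   Context: $\phi$ denotes Euler's totient function. For positive integers $a,b$, $c(a,b)$ is the least positive integer $c$ such that $\phi(a!)\,\phi(b!)$ divides $\phi(c!)$, and $r(a,b)=c(a,b)/(a+b)$. *)

theory Defs
  imports "HOL-Analysis.Analysis" "HOL-Number_Theory.Number_Theory"
begin

definition cfun :: "nat \<Rightarrow> nat \<Rightarrow> nat" where
  "cfun a b = (LEAST c. c > 0 \<and> totient (fact a) * totient (fact b) dvd totient (fact c))"

definition rfun :: "nat \<Rightarrow> nat \<Rightarrow> real" where
  "rfun a b = real (cfun a b) / real (a + b)"

end

theory Submission
  imports Defs
begin

text \<open>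
  Passing from \<open>k!\<close> to \<open>(k+1)!\<close> multiplies \<open>\<phi>\<close> by \<open>k\<close> if \<open>k+1\<close> is prime and by \<open>k+1\<close>
  otherwise; hence \<open>(n-1)! \<le> \<phi>(n!)\<close> and \<open>\<phi>(n!)\<close> divides \<open>n! (n-1)!\<close>.

  Upper bound: \<open>\<phi>(m d) = \<phi>(m) d\<close> when every prime factor of \<open>d\<close> divides \<open>m\<close>. For \<open>b \<le> a\<close> and
  \<open>d = (b!)^2\<close>, \<open>a! d\<close> divides \<open>(a+2b)!\<close>, so \<open>c(a,b) \<le> a+2b\<close> and \<open>r(b^2,b) \<rightarrow> 1\<close>.

  Lower bound: with \<open>c = c(a,b)\<close>, \<open>(a-1)! (b-1)! \<le> \<phi>(a!) \<phi>(b!) \<le> c!\<close>, which forces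
  \<open>c \<ge> max a b\<close> and \<open>(a+b)! \<le> 4^(a+b) c!\<close>. As \<open>(a+b)! \<ge> c! (c+1)^(a+b-c)\<close>, once
  \<open>a \<ge> 4^m\<close> we get \<open>m (a+b-c) \<le> a+b\<close>.
\<close>

lemma totient_mult_absorb:
  fixes m d :: nat
  assumes "m > 0" "d > 0" "\<And>p. prime p \<Longrightarrow> p dvd d \<Longrightarrow> p dvd m"
  shows "totient (m * d) = totient m * d"
proof -
  have "prime_factors (m * d) = prime_factors m"
    using assms by (auto simp: prime_factors_product in_prime_factors_iff)
  then have "real (totient (m * d)) = real (totient m * d)"
    by (simp add: totient_formula2)
  then show ?thesis
    by (simp only: of_nat_eq_iff)
qed

lemma totient_fact_Suc:
  "totient (fact (Suc n)) = (if prime (Suc n) then n else Suc n) * totient (fact n)"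
proof (cases "prime (Suc n)")
  case True
  then have "coprime (Suc n) (fact n :: nat)"
    by (simp add: prime_imp_coprime prime_dvd_fact_iff)
  then have "totient (Suc n * fact n) = totient (Suc n) * totient (fact n)"
    by (rule totient_mult_coprime)
  with True show ?thesis
    by (simp add: totient_prime fact_Suc)
next
  case False
  have "totient (fact n * Suc n) = totient (fact n) * Suc n"
  proof (rule totient_mult_absorb)
    fix p assume p: "prime p" "p dvd Suc n"
    then have "p \<le> Suc n" "p \<noteq> Suc n"
      using False by (auto simp: dvd_imp_le)
    with p show "p dvd fact n"
      by (simp add: prime_dvd_fact_iff)
  qed auto
  with False show ?thesis
    by (simp add: fact_Suc mult.commute)
qed

lemma fact_pred_le_totient_fact: "fact (n - 1) \<le> totient (fact n :: nat)"
proof (induction n)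
  case (Suc n)
  have "fact n \<le> (if prime (Suc n) then n else Suc n) * fact (n - 1)"
    by (cases n) (auto simp: fact_Suc)
  also have "\<dots> \<le> (if prime (Suc n) then n else Suc n) * totient (fact n)"
    using Suc.IH by (rule mult_le_mono2)
  finally show ?case
    by (simp only: totient_fact_Suc diff_Suc_1)
qed simp

lemma totient_fact_dvd: "totient (fact n :: nat) dvd fact n * fact (n - 1)"
proof (induction n)
  case (Suc n)
  define g where "g = (if prime (Suc n) then n else Suc n)"
  have "g * fact (n - 1) dvd (fact (Suc n) :: nat)"
  proof (cases "prime (Suc n)")
    case True
    then have "n \<ge> 1"
      using prime_gt_1_nat[OF True] by simp
    then have "g * fact (n - 1) = (fact n :: nat)"
      using True by (simp add: g_def fact_reduce[of n])
    then show ?thesis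
      by (simp add: fact_dvd)
  next
    case False
    then have "g * fact (n - 1) dvd Suc n * (fact n :: nat)"
      unfolding g_def by (simp del: mult_Suc add: mult_dvd_mono fact_dvd)
    then show ?thesis
      by (simp only: fact_Suc of_nat_id)
  qed
  then have "g * (fact n * fact (n - 1)) dvd fact (Suc n) * fact n"
    using mult_dvd_mono[OF _ dvd_refl[of "fact n"]] by (metis mult.assoc mult.commute)
  moreover have "totient (fact (Suc n)) dvd g * (fact n * fact (n - 1))"
    unfolding totient_fact_Suc g_def[symmetric] using Suc.IH by (rule mult_dvd_mono[OF dvd_refl])
  ultimately show ?case
    by (simp only: diff_Suc_1 dvd_trans)
qed simp

lemma totient_fact_mult_dvd:
  assumes "b \<le> a"
  shows "totient (fact a) * totient (fact b) dvd totient (fact (a + 2 * b) :: nat)"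
proof -
  define d :: nat where "d = fact b * fact b"
  have absorb: "totient (fact a * d) = totient (fact a) * d"
  proof (rule totient_mult_absorb)
    fix p :: nat assume p: "prime p" "p dvd d"
    then have "p \<le> b"
      by (simp add: d_def prime_dvd_mult_iff prime_dvd_fact_iff)
    with p assms show "p dvd fact a"
      by (simp add: prime_dvd_fact_iff)
  qed (simp_all add: d_def)
  have "fact a * d dvd (fact (a + 2 * b) :: nat)"
  proof -
    have "fact (a + 2 * b) = (fact a :: nat) * (fact (2 * b) * ((a + 2 * b) choose a))"
      using binomial_fact_lemma[of a "a + 2 * b"] by (simp add: mult_ac)
    moreover have "(fact (2 * b) :: nat) = d * ((2 * b) choose b)"
      using binomial_fact_lemma[of b "2 * b"] by (simp add: d_def mult_ac mult_2)
    ultimately show ?thesis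
      by simp
  qed
  then have "totient (fact a) * d dvd totient (fact (a + 2 * b))"
    unfolding absorb[symmetric] by (rule totient_dvd)
  moreover have "totient (fact b) dvd d"
  proof -
    have "totient (fact b) dvd fact b * (fact (b - 1) :: nat)"
      by (rule totient_fact_dvd)
    also have "\<dots> dvd d"
      unfolding d_def by (intro mult_dvd_mono dvd_refl fact_dvd) simp
    finally show ?thesis .
  qed
  ultimately show ?thesis
    by (meson dvd_trans mult_dvd_mono dvd_refl)
qed

lemma cfun_le:
  assumes "b \<le> a" "1 \<le> a"
  shows "cfun a b \<le> a + 2 * b"
  unfolding cfun_def using totient_fact_mult_dvd[OF assms(1)] assms
  by (intro Least_le) auto

lemma totient_fact_mult_dvd_cfun:
  "totient (fact a) * totient (fact b) dvd totient (fact (cfun a b))"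
proof -
  have "\<exists>c > 0. totient (fact a) * totient (fact b) dvd totient (fact c)"
  proof -
    obtain c where "totient (fact a) * totient (fact b) dvd totient (fact c :: nat)"
    proof (cases "b \<le> a")
      case True
      then show ?thesis
        using totient_fact_mult_dvd that by blast
    next
      case False
      then show ?thesis
        using totient_fact_mult_dvd[of a b] that by (simp add: mult.commute)
    qed
    moreover have "totient (fact c) dvd totient (fact (Suc c) :: nat)"
      by (simp add: totient_dvd fact_dvd)
    ultimately show ?thesis
      using dvd_trans zero_less_Suc by blast
  qed
  then show ?thesis
    unfolding cfun_def by (rule LeastI2_ex) auto
qed

lemma fact_pred_mult_le_fact_cfun: "fact (a - 1) * fact (b - 1) \<le> (fact (cfun a b) :: nat)"
proof -
  have "fact (a - 1) * fact (b - 1) \<le> totient (fact a) * totient (fact b)"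
    by (intro mult_le_mono fact_pred_le_totient_fact)
  also have "\<dots> \<le> totient (fact (cfun a b))"
    using totient_fact_mult_dvd_cfun by (rule dvd_imp_le) simp
  also have "\<dots> \<le> fact (cfun a b)"
    by (rule totient_le)
  finally show ?thesis .
qed

lemma le_cfun:
  assumes "3 \<le> b"
  shows "a \<le> cfun a b"
proof (rule ccontr)
  assume "\<not> a \<le> cfun a b"
  then have "fact (cfun a b) \<le> (fact (a - 1) :: nat)"
    by (intro fact_mono) simp
  moreover have "2 \<le> (fact (b - 1) :: nat)"
    using fact_ge_self[of "b - 1"] assms by simp
  then have "fact (a - 1) * 2 \<le> (fact (a - 1) * fact (b - 1) :: nat)"
    by (rule mult_le_mono2)
  ultimately have "fact (a - 1) * 2 \<le> (fact (a - 1) :: nat)"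
    using fact_pred_mult_le_fact_cfun[of a b] by linarith
  then show False
    by simp
qed

lemma fact_mult_Suc_power_le: "fact c * (c + 1) ^ k \<le> (fact (c + k) :: nat)"
proof (induction k)
  case (Suc k)
  have "fact c * (c + 1) ^ Suc k = (c + 1) * (fact c * (c + 1) ^ k)"
    by (simp add: algebra_simps)
  also have "\<dots> \<le> (c + Suc k) * fact (c + k)"
    using Suc.IH by (intro mult_le_mono) auto
  also have "\<dots> = fact (c + Suc k)"
    by (simp add: fact_Suc)
  finally show ?case .
qed simp

lemma fact_add_le:
  assumes "1 \<le> a" "1 \<le> b"
  shows "fact (a + b) \<le> 4 ^ (a + b) * (fact (a - 1) * fact (b - 1) :: nat)"
proof -
  have "fact (a + b) = (a * b) * (fact (a - 1) * fact (b - 1)) * (a + b choose a :: nat)"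
    using binomial_fact_lemma[of a "a + b"] assms by (simp add: fact_reduce[of a] fact_reduce[of b] mult_ac)
  also have "\<dots> \<le> 2 ^ (a + b) * (fact (a - 1) * fact (b - 1)) * 2 ^ (a + b)"
  proof (intro mult_le_mono order.refl binomial_le_pow2)
    show "a * b \<le> 2 ^ (a + b)"
      unfolding power_add by (intro mult_le_mono less_imp_le less_exp)
  qed
  also have "\<dots> = 4 ^ (a + b) * (fact (a - 1) * fact (b - 1))"
    by (simp add: power_mult_distrib[symmetric] mult_ac)
  finally show ?thesis .
qed

lemma cfun_lower:
  assumes "3 \<le> b" "4 ^ m \<le> a"
  shows "m * (a + b - cfun a b) \<le> a + b"
proof (cases "cfun a b \<le> a + b")
  case True
  have "1 \<le> a"
    using order_trans[OF one_le_power assms(2)] by simp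
  define c where "c = cfun a b"
  define k where "k = a + b - c"
  have "fact c * (c + 1) ^ k \<le> fact (a + b)"
    using fact_mult_Suc_power_le[of c k] True by (simp add: k_def c_def)
  also have "\<dots> \<le> 4 ^ (a + b) * fact c"
    using fact_add_le[OF \<open>1 \<le> a\<close>, of b] fact_pred_mult_le_fact_cfun[of a b] assms(1)
    by (simp add: c_def order_trans)
  finally have "(c + 1) ^ k \<le> (4 :: nat) ^ (a + b)"
    by (simp add: mult.commute)
  moreover have "(4 :: nat) ^ (m * k) \<le> (c + 1) ^ k"
    using assms le_cfun[OF assms(1), of a] by (simp add: power_mult c_def power_mono)
  ultimately have "(4 :: nat) ^ (m * k) \<le> 4 ^ (a + b)"
    by (rule order_trans[rotated])
  then show ?thesis
    using power_le_imp_le_exp by (simp add: k_def c_def)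
qed simp

lemma rfun_ge:
  assumes "3 \<le> b" "4 ^ m \<le> a" "0 < m"
  shows "1 - 1 / real m \<le> rfun a b"
proof -
  have "real m * (real (a + b) - real (cfun a b)) \<le> real (a + b)"
  proof (cases "cfun a b \<le> a + b")
    case True
    then show ?thesis
      using cfun_lower[OF assms(1,2)] by (metis of_nat_diff of_nat_le_iff of_nat_mult)
  next
    case False
    then show ?thesis
      using mult_nonneg_nonpos[of "real m" "real (a + b) - real (cfun a b)"] by simp
  qed
  then show ?thesis
    using assms unfolding rfun_def by (simp add: field_simps)
qed

lemma rfun_le:
  assumes "b \<le> a"
  shows "rfun a b \<le> 1 + real b / real (a + b)"
proof (cases "a = 0")
  case False
  have "rfun a b \<le> (real (a + b) + real b) / real (a + b)"
    using cfun_le[OF assms] False unfolding rfun_def by (simp add: divide_right_mono)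
  also have "\<dots> = 1 + real b / real (a + b)"
    using False by (simp add: field_simps)
  finally show ?thesis .
qed (use assms in \<open>simp add: rfun_def\<close>)

lemma rfun_square_le: "rfun (b * b) b \<le> 1 + inverse (real (Suc b))"
proof (cases "b = 0")
  case False
  have "real (b * b + b) = real b * real (Suc b)"
    by (simp add: algebra_simps)
  then have "real b / real (b * b + b) = inverse (real (Suc b))"
    using False by (simp add: inverse_eq_divide)
  then show ?thesis
    using rfun_le[of b "b * b"] by (simp add: le_square)
qed (simp add: rfun_def)

lemma Liminf_le_Liminf_compose:
  assumes "filterlim g F G"
  shows "Liminf F f \<le> Liminf G (\<lambda>x. f (g x))"
proof -
  have "Liminf F f \<le> Liminf (filtermap g G) f"
    using assms unfolding Liminf_def filterlim_def
    by (intro SUP_subset_mono) (auto intro: filter_leD)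
  also have "\<dots> \<le> Liminf G (\<lambda>x. f (g x))"
    by (rule Liminf_filtermap_le)
  finally show ?thesis .
qed

theorem theorem1p2:
  shows "Liminf (sequentially \<times>\<^sub>F sequentially) (\<lambda>(a, b). ereal (rfun a b)) = 1"
proof (rule antisym)
  have diagonal: "filterlim (\<lambda>b. (b * b, b)) (sequentially \<times>\<^sub>F sequentially) sequentially"
    by (intro filterlim_Pair filterlim_ident filterlim_at_top_mono[OF filterlim_ident])
      (simp add: le_square)
  have "Liminf (sequentially \<times>\<^sub>F sequentially) (\<lambda>(a, b). ereal (rfun a b))
      \<le> liminf (\<lambda>b. ereal (rfun (b * b) b))"
    using Liminf_le_Liminf_compose[OF diagonal, of "\<lambda>(a, b). ereal (rfun a b)"] by simp
  also have "\<dots> \<le> liminf (\<lambda>b. ereal (1 + inverse (real (Suc b))))"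
    using rfun_square_le by (intro Liminf_mono always_eventually) simp
  also have "\<dots> = 1"
    using LIMSEQ_inverse_real_of_nat_add[of 1] by (intro lim_imp_Liminf) (simp_all add: one_ereal_def)
  finally show "Liminf (sequentially \<times>\<^sub>F sequentially) (\<lambda>(a, b). ereal (rfun a b)) \<le> 1" .
next
  have "ereal (1 - 1 / real (Suc m)) \<le> Liminf (sequentially \<times>\<^sub>F sequentially) (\<lambda>(a, b). ereal (rfun a b))"
    for m
  proof (intro Liminf_bounded, unfold eventually_prod_sequentially, intro exI allI impI)
    fix b a :: nat
    assume "4 ^ Suc m + 3 \<le> b" "4 ^ Suc m + 3 \<le> a"
    then show "ereal (1 - 1 / real (Suc m)) \<le> (case (a, b) of (a, b) \<Rightarrow> ereal (rfun a b))"
      using rfun_ge[where m = "Suc m"] by simp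
  qed
  moreover have "(\<lambda>m. ereal (1 - 1 / real (Suc m))) \<longlonglongrightarrow> 1"
    using LIMSEQ_inverse_real_of_nat_add_minus[of 1] by (simp add: one_ereal_def inverse_eq_divide)
  ultimately show "1 \<le> Liminf (sequentially \<times>\<^sub>F sequentially) (\<lambda>(a, b). ereal (rfun a b))"
    by (intro LIMSEQ_le_const2) auto
qed

end
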